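(* Let $\mathcal{A}$ be an abelian normed algebra, $n\in\mathbb{N}$ and $x_1,\dots,x_n\in\mathcal{A}$. Then the product $x_1x_2\cdots x_n$ is boundedly approximately invertible in $\mathcal{A}$ if and only if each $x_k$, $k=1,\dots,n$, is boundedly approximately invertible in $\mathcal{A}$.
   Context: An approximate identity in $\mathcal{A}$ is a net $(e_j)_{j\in J}$ with $\lim_j e_jy=\lim_j ye_j=y$ for all $y\in\mathcal{A}$; it is norm bounded if $\sup_j\|e_j\|<\infty$. In an abelian normed algebra, $x\in\mathcal{A}$ is boundedly approximately invertible if there is a net $(r_j)_{j\in J}$ in $\mathcal{A}$ such that $(xr_j)_{j\in J}$ is a norm bounded approximate identity in $\mathcal{A}$. *)

theory Defs
  imports "HOL-Analysis.Analysis"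
begin

text \<open>Nets are rendered in the standard Isabelle way: a net \<open>(e j)\<close> is a function
  \<open>e\<close> together with a proper filter \<open>F\<close> on the index type (the filter of tails of
  the directed index set).  Norm boundedness \<open>sup_j norm (e j) < \<infinity>\<close> is required
  on a tail of the net (every tail of a net is again a net with the same limits).\<close>

definition bdd_approx_identity :: "'i filter \<Rightarrow> ('i \<Rightarrow> 'a::real_normed_algebra) \<Rightarrow> bool" where
  "bdd_approx_identity F e \<longleftrightarrow>
     F \<noteq> bot \<and>
     (\<forall>y. ((\<lambda>j. e j * y) \<longlongrightarrow> y) F \<and> ((\<lambda>j. y * e j) \<longlongrightarrow> y) F) \<and>
     (\<exists>M. \<forall>\<^sub>F j in F. norm (e j) \<le> M)"

text \<open>Without loss of generality
  the net is indexed by its own values (push forward of the tail filter along \<open>r\<close>).\<close>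

definition bdd_approx_invertible :: "'a::{real_normed_algebra, comm_ring} \<Rightarrow> bool" where
  "bdd_approx_invertible x \<longleftrightarrow>
     (\<exists>F :: 'a filter. \<exists>r :: 'a \<Rightarrow> 'a. bdd_approx_identity F (\<lambda>j. x * r j))"

text \<open>The product \<open>x_1 x_2 \<cdots> x_n\<close> for \<open>n \<ge> 1\<close> (the algebra need not be unital;
  the value at \<open>n = 0\<close> is irrelevant).\<close>

fun seq_prod :: "(nat \<Rightarrow> 'a::{times,zero}) \<Rightarrow> nat \<Rightarrow> 'a" where
  "seq_prod x 0 = 0"
| "seq_prod x (Suc 0) = x 1"
| "seq_prod x (Suc (Suc m)) = seq_prod x (Suc m) * x (Suc (Suc m))"

end

theory Submission
  imports Defs
begin

text \<open>The factors of a product are boundedly approximately invertible because the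
  remaining factor can be absorbed into the net: if \<open>(a b r_j)\<close> is a bounded
  approximate identity, so is \<open>(a (b r_j))\<close>.  Conversely, if \<open>(a r_i)\<close> and \<open>(b s_j)\<close>
  are bounded approximate identities, then so is \<open>(a b r_i s_j)\<close> along the product of
  the two index filters, since \<open>e f y - y = e (f y - y) + (e y - y)\<close> and bounded
  times null is null.\<close>

lemma bdd_approx_identity_Bfun:
  assumes "bdd_approx_identity F e"
  shows "Bfun e F"
  using assms unfolding bdd_approx_identity_def by (blast intro: BfunI)

lemma bdd_approx_identity_compose:
  assumes e: "bdd_approx_identity F e" and h: "filterlim h F H" and "H \<noteq> bot"
  shows "bdd_approx_identity H (e \<circ> h)"
proof -
  obtain M where "\<forall>\<^sub>F j in F. norm (e j) \<le> M"
    using e unfolding bdd_approx_identity_def by blast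
  then have "\<forall>\<^sub>F i in H. norm (e (h i)) \<le> M"
    using h filterlim_iff by blast
  moreover have "((\<lambda>i. e (h i) * y) \<longlongrightarrow> y) H" "((\<lambda>i. y * e (h i)) \<longlongrightarrow> y) H" for y
    using e unfolding bdd_approx_identity_def
    by (auto intro: filterlim_compose[OF _ h, where g = "\<lambda>j. e j * y"]
        filterlim_compose[OF _ h, where g = "\<lambda>j. y * e j"])
  ultimately show ?thesis
    using \<open>H \<noteq> bot\<close> unfolding bdd_approx_identity_def comp_def by blast
qed

lemma bdd_approx_identity_mult:
  fixes e f :: "'i \<Rightarrow> 'a::real_normed_algebra"
  assumes e: "bdd_approx_identity F e" and f: "bdd_approx_identity F f"
  shows "bdd_approx_identity F (\<lambda>j. e j * f j)"
proof -
  obtain M N where "\<forall>\<^sub>F j in F. norm (e j) \<le> M" "\<forall>\<^sub>F j in F. norm (f j) \<le> N"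
    using e f unfolding bdd_approx_identity_def by blast
  then have "\<forall>\<^sub>F j in F. norm (e j * f j) \<le> M * N"
    by eventually_elim (meson norm_mult_ineq mult_mono norm_ge_zero order_trans)
  moreover have "((\<lambda>j. e j * f j * y) \<longlongrightarrow> y) F" for y
  proof -
    have "Zfun (\<lambda>j. e j * (f j * y - y)) F"
      using bounded_bilinear.Bfun_prod_Zfun[OF bounded_bilinear_mult
          bdd_approx_identity_Bfun[OF e]] f
      unfolding bdd_approx_identity_def tendsto_Zfun_iff by blast
    moreover have "Zfun (\<lambda>j. e j * y - y) F"
      using e unfolding bdd_approx_identity_def tendsto_Zfun_iff by blast
    ultimately have "Zfun (\<lambda>j. e j * (f j * y - y) + (e j * y - y)) F"
      by (rule Zfun_add)
    then show ?thesis
      unfolding tendsto_Zfun_iff by (simp add: algebra_simps)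
  qed
  moreover have "((\<lambda>j. y * (e j * f j)) \<longlongrightarrow> y) F" for y
  proof -
    have "Zfun (\<lambda>j. (y * e j - y) * f j) F"
      using bounded_bilinear.Zfun_prod_Bfun[OF bounded_bilinear_mult _
          bdd_approx_identity_Bfun[OF f]] e
      unfolding bdd_approx_identity_def tendsto_Zfun_iff by blast
    moreover have "Zfun (\<lambda>j. y * f j - y) F"
      using f unfolding bdd_approx_identity_def tendsto_Zfun_iff by blast
    ultimately have "Zfun (\<lambda>j. (y * e j - y) * f j + (y * f j - y)) F"
      by (rule Zfun_add)
    then show ?thesis
      unfolding tendsto_Zfun_iff by (simp add: algebra_simps)
  qed
  ultimately show ?thesis
    using e unfolding bdd_approx_identity_def by blast
qed

lemma bdd_approx_identity_prod_filter:
  fixes e f :: "_ \<Rightarrow> 'a::real_normed_algebra"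
  assumes e: "bdd_approx_identity F e" and f: "bdd_approx_identity G f"
  shows "bdd_approx_identity (F \<times>\<^sub>F G) (\<lambda>p. e (fst p) * f (snd p))"
proof -
  have "F \<times>\<^sub>F G \<noteq> bot"
    using e f unfolding bdd_approx_identity_def by (simp add: prod_filter_eq_bot)
  then have "bdd_approx_identity (F \<times>\<^sub>F G) (e \<circ> fst)" "bdd_approx_identity (F \<times>\<^sub>F G) (f \<circ> snd)"
    using bdd_approx_identity_compose[OF e filterlim_fst]
      bdd_approx_identity_compose[OF f filterlim_snd] by auto
  then show ?thesis
    using bdd_approx_identity_mult by fastforce
qed

lemma bdd_approx_invertibleI:
  fixes x :: "'a::{real_normed_algebra, comm_ring}"
  assumes "bdd_approx_identity F (\<lambda>j. x * r j)"
  shows "bdd_approx_invertible x"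
proof -
  have "bdd_approx_identity (filtermap r F) (\<lambda>j. x * id j)"
    using assms unfolding bdd_approx_identity_def
    by (simp add: filtermap_bot_iff filterlim_filtermap eventually_filtermap)
  then show ?thesis
    unfolding bdd_approx_invertible_def by blast
qed

lemma bdd_approx_invertible_mult_left:
  fixes a b :: "'a::{real_normed_algebra, comm_ring}"
  assumes "bdd_approx_invertible (a * b)"
  shows "bdd_approx_invertible a"
proof -
  obtain F :: "'a filter" and r where "bdd_approx_identity F (\<lambda>j. a * b * r j)"
    using assms unfolding bdd_approx_invertible_def by blast
  then have "bdd_approx_identity F (\<lambda>j. a * (b * r j))"
    by (simp add: mult.assoc)
  then show ?thesis
    by (rule bdd_approx_invertibleI)
qed

lemma bdd_approx_invertible_mult:
  fixes a b :: "'a::{real_normed_algebra, comm_ring}"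
  assumes "bdd_approx_invertible a" "bdd_approx_invertible b"
  shows "bdd_approx_invertible (a * b)"
proof -
  obtain F :: "'a filter" and r where "bdd_approx_identity F (\<lambda>j. a * r j)"
    using assms(1) unfolding bdd_approx_invertible_def by blast
  moreover obtain G :: "'a filter" and s where "bdd_approx_identity G (\<lambda>j. b * s j)"
    using assms(2) unfolding bdd_approx_invertible_def by blast
  ultimately have "bdd_approx_identity (F \<times>\<^sub>F G) (\<lambda>p. a * r (fst p) * (b * s (snd p)))"
    by (rule bdd_approx_identity_prod_filter)
  then have "bdd_approx_identity (F \<times>\<^sub>F G) (\<lambda>p. a * b * (r (fst p) * s (snd p)))"
    by (simp add: ac_simps)
  then show ?thesis
    by (rule bdd_approx_invertibleI)
qed

lemma bdd_approx_invertible_mult_iff: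
  fixes a b :: "'a::{real_normed_algebra, comm_ring}"
  shows "bdd_approx_invertible (a * b) \<longleftrightarrow> bdd_approx_invertible a \<and> bdd_approx_invertible b"
  by (metis bdd_approx_invertible_mult bdd_approx_invertible_mult_left mult.commute)

lemma bdd_approx_invertible_seq_prod_Suc:
  fixes x :: "nat \<Rightarrow> 'a::{real_normed_algebra, comm_ring}"
  shows "bdd_approx_invertible (seq_prod x (Suc m)) \<longleftrightarrow>
         (\<forall>k\<in>{1..Suc m}. bdd_approx_invertible (x k))"
proof (induction m)
  case 0
  then show ?case by simp
next
  case (Suc m)
  have "{1..Suc (Suc m)} = insert (Suc (Suc m)) {1..Suc m}" by auto
  then show ?case
    using Suc by (auto simp add: bdd_approx_invertible_mult_iff)
qed

theorem proposition2p19: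
  fixes x :: "nat \<Rightarrow> 'a::{real_normed_algebra, comm_ring}" and n :: nat
  assumes "n \<ge> 1"
  shows "bdd_approx_invertible (seq_prod x n) \<longleftrightarrow>
         (\<forall>k\<in>{1..n}. bdd_approx_invertible (x k))"
proof -
  obtain m where "n = Suc m"
    using assms by (cases n) auto
  then show ?thesis
    using bdd_approx_invertible_seq_prod_Suc by simp
qed

end
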